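(* Each of the following lattices is 3-remote, i.e. for every lattice point $z$ with $|z|=\sqrt3$ one has $\inf_{x\in K}|z-x|\ge1$, where $K$ is the Dirichlet region of the lattice: (1) $\mathbb{Z}\subset\mathbb{R}$; (2) $\mathbb{Z}[\mathbbm{i}]\subset\mathbb{C}$; (3) $\mathbb{Z}[\frac{1+\sqrt3\mathbbm{i}}{2}]\subset\mathbb{C}$; (4) the Hurwitz integers $\mathbb{Z}\oplus\mathbb{Z}\mathbbm{i}\oplus\mathbb{Z}\mathbbm{j}\oplus\mathbb{Z}\frac{1+\mathbbm{i}+\mathbbm{j}+\mathbbm{k}}{2}\subset\mathbb{H}$; (5) $\mathbb{Z}\oplus\mathbb{Z}\mathbbm{i}\oplus\mathbb{Z}\frac{1+\sqrt3\mathbbm{j}}{2}\oplus\mathbb{Z}\frac{\mathbbm{i}+\sqrt3\mathbbm{k}}{2}\subset\mathbb{H}$; (6) the Cayley integers $\mathbb{Z}\oplus\mathbb{Z}e_1\oplus\mathbb{Z}e_2\oplus\mathbb{Z}e_3\oplus\mathbb{Z}h\oplus\mathbb{Z}e_1h\oplus\mathbb{Z}e_2h\oplus\mathbb{Z}e_3h\subset\mathbb{O}$ with $h=(e_1+e_2+e_3-e_4)/2$; (7) $\mathbb{Z}(\frac1{\sqrt2},\frac1{\sqrt2},0)\oplus\mathbb{Z}(\frac1{\sqrt2},-\frac1{\sqrt2},0)\oplus\mathbb{Z}(\frac1{\sqrt2},0,\frac1{\sqrt2})\subset\mathbb{R}^3$; (8) $\mathbb{Z}(1,0,0)\oplus\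mathbb{Z}(\frac12,\frac{\sqrt3}2,0)\oplus\mathbb{Z}(0,0,1)\subset\mathbb{R}^3$.
   Context: $\mathbb{C},\mathbb{H},\mathbb{O}$ are identified with $\mathbb{R}^2,\mathbb{R}^4,\mathbb{R}^8$ via the bases $\{1,\mathbbm{i}\}$, $\{1,\mathbbm{i},\mathbbm{j},\mathbbm{k}\}$, $\{1,e_1,\dots,e_7\}$ (with $e_i^2=-1$), with Euclidean norm $|\cdot|$; octonion products in (6) are taken with the standard multiplication conventions used for the Cayley integers (Rehm's presentation). The Dirichlet region of a lattice $\mathcal{Z}$ is $K=\{x:|x|\le|x-z|\ \forall z\in\mathcal{Z}\}$. *)

theory Defs
  imports "HOL-Analysis.Analysis"
begin

definition int_span :: "'a::real_vector list \<Rightarrow> 'a set" where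
  "int_span gs = {(\<Sum>i<length gs. of_int (c i) *\<^sub>R gs ! i) | c :: nat \<Rightarrow> int. True}"

definition dirichlet_region :: "'a::real_normed_vector set \<Rightarrow> 'a set" where
  "dirichlet_region Z = {x. \<forall>z\<in>Z. norm x \<le> norm (x - z)}"

definition three_remote :: "'a::real_normed_vector set \<Rightarrow> bool" where
  "three_remote Z \<longleftrightarrow>
     (\<forall>z\<in>Z. norm z = sqrt 3 \<longrightarrow> infdist z (dirichlet_region Z) \<ge> 1)"

text \<open>Quaternions as real^4 with coordinates w.r.t. 1, i, j, k (Hamilton product).\<close>
definition qmul :: "real^4 \<Rightarrow> real^4 \<Rightarrow> real^4" where
  "qmul p q = vector
     [p$1*q$1 - p$2*q$2 - p$3*q$3 - p$4*q$4,
      p$1*q$2 + p$2*q$1 + p$3*q$4 - p$4*q$3,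
      p$1*q$3 - p$2*q$4 + p$3*q$1 + p$4*q$2,
      p$1*q$4 + p$2*q$3 - p$3*q$2 + p$4*q$1]"

definition qconj :: "real^4 \<Rightarrow> real^4" where
  "qconj p = vector [p$1, - p$2, - p$3, - p$4]"

text \<open>Octonions as real^8 with coordinates w.r.t. 1, e1, ..., e7, realised by the
  Cayley--Dickson doubling O = H + H e4 with e1,e2,e3 = i,j,k, e4 = (0,1) and
  e5 = e1 e4, e6 = e2 e4, e7 = e3 e4.\<close>
definition oct_fst :: "real^8 \<Rightarrow> real^4" where
  "oct_fst x = vector [x$1, x$2, x$3, x$4]"

definition oct_snd :: "real^8 \<Rightarrow> real^4" where
  "oct_snd x = vector [x$5, x$6, x$7, x$8]"

definition oct_pair :: "real^4 \<Rightarrow> real^4 \<Rightarrow> real^8" where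
  "oct_pair a b = vector [a$1, a$2, a$3, a$4, b$1, b$2, b$3, b$4]"

definition omul :: "real^8 \<Rightarrow> real^8 \<Rightarrow> real^8" where
  "omul x y = (let a = oct_fst x; b = oct_snd x; c = oct_fst y; d = oct_snd y in
     oct_pair (qmul a c - qmul (qconj d) b) (qmul d a + qmul b (qconj c)))"

text \<open>oct_unit 0 = 1, oct_unit k = e_k (k = 1..7).\<close>
definition oct_unit :: "nat \<Rightarrow> real^8" where
  "oct_unit k = vector (map (\<lambda>n. if n = k then 1 else 0) [0..<8])"

definition oct_h :: "real^8" where
  "oct_h = (1/2) *\<^sub>R (oct_unit 1 + oct_unit 2 + oct_unit 3 - oct_unit 4)"

end

theory Submission
  imports Defs
begin

text \<open>If a lattice point \<open>z\<close> with \<open>|z|\<^sup>2 = 3\<close> is the sum \<open>u + v\<close> of two lattice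
  points of norm at most 1, then \<open>z\<close> has distance at least 1 from the Dirichlet region \<open>K\<close>:
  for \<open>x \<in> K\<close> and a lattice point \<open>w\<close>, \<open>|x| \<le> |x - w|\<close> means \<open>2 (x \<bullet> w) \<le> |w|\<^sup>2\<close>, so
  \<open>|z - x|\<^sup>2 = 3 - 2 (x \<bullet> u) - 2 (x \<bullet> v) + |x|\<^sup>2 \<ge> 1\<close>.
  It remains to split every vector of squared norm 3 into two unit vectors (in \<open>\<int>\<close> and
  \<open>\<int>[i]\<close> there are none). For the lattices built from Eisenstein integers this is a case
  analysis on the form \<open>a\<^sup>2 + a b + b\<^sup>2\<close>. For the Hurwitz, face-centred cubic and Cayley
  lattices, a multiple \<open>\<surd>s z\<close> has integer coordinates subject to parity conditions, and a unit
  vector \<open>r\<close> with \<open>2 (z \<bullet> r) = 3\<close> is found by putting \<open>r\<close> equal to a constant times the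
  sign of \<open>z\<close> on a suitable support; that a support from a short list always works is
  checked by evaluation over all coordinate patterns up to sign.\<close>

lemma dirichlet_region_inner_le:
  fixes x :: "'a::real_inner"
  assumes "x \<in> dirichlet_region Z" "w \<in> Z"
  shows "2 * (x \<bullet> w) \<le> norm w ^ 2"
proof -
  have "norm x ^ 2 \<le> norm (x - w) ^ 2"
    using assms by (simp add: dirichlet_region_def power_mono)
  then show ?thesis
    by (simp add: power2_norm_eq_inner inner_diff_left inner_diff_right inner_commute)
qed

lemma three_remoteI:
  fixes Z :: "'a::real_inner set"
  assumes split: "\<And>z. z \<in> Z \<Longrightarrow> norm z = sqrt 3 \<Longrightarrow>
                    \<exists>u\<in>Z. z - u \<in> Z \<and> norm u \<le> 1 \<and> norm (z - u) \<le> 1"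
  shows "three_remote Z"
  unfolding three_remote_def
proof (intro ballI impI)
  fix z assume "z \<in> Z" "norm z = sqrt 3"
  then obtain u where "u \<in> Z" "z - u \<in> Z" "norm u \<le> 1" "norm (z - u) \<le> 1"
    using split by blast
  have inner_le: "2 * (x \<bullet> w) \<le> 1" if "x \<in> dirichlet_region Z" "w \<in> Z" "norm w \<le> 1" for x w
    using dirichlet_region_inner_le[OF that(1,2)] power_le_one[OF norm_ge_zero that(3), of 2]
    by linarith
  have "norm z ^ 2 = 3"
    using \<open>norm z = sqrt 3\<close> by simp
  have "1 \<le> dist z x" if x: "x \<in> dirichlet_region Z" for x
  proof -
    have "dist z x ^ 2 = norm z ^ 2 - 2 * (x \<bullet> u) - 2 * (x \<bullet> (z - u)) + norm x ^ 2"
      by (simp add: dist_norm power2_norm_eq_inner inner_diff_left inner_diff_right inner_commute)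
    also have "\<dots> \<ge> 1"
      using inner_le[OF x \<open>u \<in> Z\<close> \<open>norm u \<le> 1\<close>]
        inner_le[OF x \<open>z - u \<in> Z\<close> \<open>norm (z - u) \<le> 1\<close>]
        \<open>norm z ^ 2 = 3\<close> zero_le_power2[of "norm x"] by linarith
    finally show ?thesis
      by (metis one_power2 power2_le_imp_le zero_le_dist)
  qed
  moreover have "0 \<in> dirichlet_region Z"
    by (simp add: dirichlet_region_def)
  ultimately show "1 \<le> infdist z (dirichlet_region Z)"
    by (auto simp: infdist_def intro: cINF_greatest)
qed

definition int_comb :: "'a::real_vector list \<Rightarrow> (nat \<Rightarrow> int) \<Rightarrow> 'a" where
  "int_comb gs c = (\<Sum>i<length gs. of_int (c i) *\<^sub>R gs ! i)"

lemma int_span_eq_range_int_comb: "int_span gs = range (int_comb gs)"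
  by (auto simp: int_span_def int_comb_def)

lemma int_comb_diff: "int_comb gs (\<lambda>i. c i - d i) = int_comb gs c - int_comb gs d"
  by (simp add: int_comb_def scaleR_diff_left sum_subtractf)

lemma int_comb_Nil [simp]: "int_comb [] c = 0"
  by (simp add: int_comb_def)

lemma int_comb_Cons [simp]:
  "int_comb (g # gs) c = of_int (c 0) *\<^sub>R g + int_comb gs (\<lambda>i. c (Suc i))"
  unfolding int_comb_def length_Cons sum.lessThan_Suc_shift by simp

lemma three_remote_int_span_quadratic_form:
  fixes gs :: "'a::real_inner list" and F :: "(nat \<Rightarrow> int) \<Rightarrow> int"
  assumes "s > 0"
    and norm_comb: "\<And>c. of_int s * norm (int_comb gs c) ^ 2 = of_int (F c)"
    and split: "\<And>c. F c = 3 * s \<Longrightarrow> \<exists>d. F d = s \<and> F (\<lambda>i. c i - d i) = s"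
  shows "three_remote (int_span gs)"
proof (rule three_remoteI)
  have norm_le_1: "norm (int_comb gs c) \<le> 1" if "F c = s" for c
    using norm_comb[of c] that \<open>s > 0\<close> by (auto simp: power2_eq_1_iff)
  fix z assume "z \<in> int_span gs" "norm z = sqrt 3"
  then obtain c where z: "z = int_comb gs c"
    by (auto simp: int_span_eq_range_int_comb)
  have "of_int (F c) = (of_int (3 * s) :: real)"
    using norm_comb[of c] \<open>norm z = sqrt 3\<close> by (simp add: z)
  then obtain d where "F d = s" "F (\<lambda>i. c i - d i) = s"
    using split of_int_eq_iff by blast
  then have "norm (int_comb gs d) \<le> 1" "norm (z - int_comb gs d) \<le> 1"
    using norm_le_1 by (auto simp: z int_comb_diff[symmetric])
  moreover have "int_comb gs d \<in> int_span gs" "z - int_comb gs d \<in> int_span gs"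
    by (simp_all add: int_span_eq_range_int_comb z int_comb_diff[symmetric])
  ultimately show "\<exists>u\<in>int_span gs. z - u \<in> int_span gs \<and> norm u \<le> 1 \<and> norm (z - u) \<le> 1"
    by blast
qed

lemma three_remote_int_span_coordinates:
  fixes gs :: "'a::real_inner list" and Y :: "(nat \<Rightarrow> int) \<Rightarrow> nat \<Rightarrow> int"
    and P :: "(nat \<Rightarrow> int) \<Rightarrow> bool"
  assumes "s > 0"
    and norm_comb: "\<And>c. of_int s * norm (int_comb gs c) ^ 2 = of_int (\<Sum>k<n. (Y c k)^2)"
    and Y_diff: "\<And>c d k. k < n \<Longrightarrow> Y (\<lambda>i. c i - d i) k = Y c k - Y d k"
    and Y_onto: "\<And>y. P y \<Longrightarrow> \<exists>c. \<forall>k<n. Y c k = y k"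
    and P_Y: "\<And>c. P (Y c)"
    and split: "\<And>y. (\<Sum>k<n. (y k)^2) = 3 * s \<Longrightarrow> P y \<Longrightarrow>
                  \<exists>r. P r \<and> (\<Sum>k<n. (r k)^2) = s \<and> (\<Sum>k<n. (y k - r k)^2) = s"
  shows "three_remote (int_span gs)"
proof (rule three_remote_int_span_quadratic_form[OF \<open>s > 0\<close> norm_comb])
  fix c assume "(\<Sum>k<n. (Y c k)^2) = 3 * s"
  then obtain r where "P r" "(\<Sum>k<n. (r k)^2) = s" "(\<Sum>k<n. (Y c k - r k)^2) = s"
    using split P_Y by blast
  moreover obtain d where d: "\<forall>k<n. Y d k = r k"
    using Y_onto \<open>P r\<close> by blast
  ultimately have "(\<Sum>k<n. (Y d k)^2) = s" "(\<Sum>k<n. (Y (\<lambda>i. c i - d i) k)^2) = s"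
    by (simp_all add: Y_diff d cong: sum.cong_simp)
  then show "\<exists>d. (\<Sum>k<n. (Y d k)^2) = s \<and> (\<Sum>k<n. (Y (\<lambda>i. c i - d i) k)^2) = s"
    by blast
qed

lemma int_le_power2: "(v::int) \<le> v^2"
  by (cases "v \<le> 0") (auto intro: self_le_power order.trans[OF _ zero_le_power2])

fun sum_sq_lists :: "nat \<Rightarrow> int \<Rightarrow> int list list" where
  "sum_sq_lists 0 s = (if s = 0 then [[]] else [])"
| "sum_sq_lists (Suc n) s =
     concat (map (\<lambda>v. map ((#) v) (sum_sq_lists n (s - v^2))) (filter (\<lambda>v. v^2 \<le> s) [0..s]))"

lemma in_sum_sq_lists:
  assumes "length p = n" "\<forall>v\<in>set p. 0 \<le> v" "(\<Sum>v\<leftarrow>p. v^2) = s"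
  shows "p \<in> set (sum_sq_lists n s)"
  using assms
proof (induction p arbitrary: n s)
  case Nil
  then show ?case by simp
next
  case (Cons v p)
  then obtain n' where n: "n = Suc n'"
    by (cases n) auto
  have "0 \<le> (\<Sum>v\<leftarrow>p. v^2)"
    by (rule sum_list_nonneg) auto
  then have "v^2 \<le> s"
    using Cons.prems by simp
  moreover have "p \<in> set (sum_sq_lists n' (s - v^2))"
    using Cons by (auto simp: n)
  ultimately show ?case
    using Cons.prems n order.trans[OF int_le_power2] by auto
qed

lemma abs_in_sum_sq_lists:
  fixes y :: "nat \<Rightarrow> int"
  assumes "(\<Sum>i<n. (y i)^2) = s"
  shows "map (\<lambda>i. \<bar>y i\<bar>) [0..<n] \<in> set (sum_sq_lists n s)"
proof (rule in_sum_sq_lists)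
  show "(\<Sum>v\<leftarrow>map (\<lambda>i. \<bar>y i\<bar>) [0..<n]. v^2) = s"
    using assms by (simp add: sum_list_sum_nth atLeast0LessThan)
qed auto

lemma sum_power2_diff:
  fixes f g :: "'a \<Rightarrow> 'b::comm_ring_1"
  shows "(\<Sum>i\<in>A. (f i - g i)^2) = (\<Sum>i\<in>A. (f i)^2) - 2 * (\<Sum>i\<in>A. f i * g i) + (\<Sum>i\<in>A. (g i)^2)"
  by (simp add: power2_diff sum.distrib sum_subtractf sum_distrib_left mult.assoc)

text \<open>A certificate lists candidate vectors \<open>m\<close> times a sign on the support \<open>T\<close>; every
  sign-free coordinate pattern of a vector of squared norm \<open>S\<close> obeying the congruence condition
  \<open>P\<close> must admit one whose inner product with it is \<open>S/2\<close>.\<close>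
definition split_certificate ::
    "nat \<Rightarrow> ((nat \<Rightarrow> int) \<Rightarrow> bool) \<Rightarrow> (int \<times> nat list) list \<Rightarrow> int \<Rightarrow> int \<Rightarrow> bool" where
  "split_certificate n P opts R S \<longleftrightarrow>
     (\<forall>(m, T)\<in>set opts. distinct T \<and> (\<forall>i\<in>set T. i < n) \<and> m^2 * int (length T) = R
                        \<and> P (\<lambda>i. if i \<in> set T then m else 0)) \<and>
     (\<forall>p\<in>set (sum_sq_lists n S). P (\<lambda>i. p ! i) \<longrightarrow>
                                 (\<exists>(m, T)\<in>set opts. 2 * m * (\<Sum>i\<leftarrow>T. p ! i) = S))"

lemma split_by_sign_pattern:
  fixes P :: "(nat \<Rightarrow> int) \<Rightarrow> bool" and y :: "nat \<Rightarrow> int"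
  assumes P_mod_2: "\<And>y y'. (\<forall>i<n. even (y i - y' i)) \<Longrightarrow> P y = P y'"
    and certificate: "split_certificate n P opts R S"
    and y: "(\<Sum>i<n. (y i)^2) = S" "P y"
  shows "\<exists>r. P r \<and> (\<Sum>i<n. (r i)^2) = R \<and> (\<Sum>i<n. (y i - r i)^2) = R"
proof -
  define p where "p = map (\<lambda>i. \<bar>y i\<bar>) [0..<n]"
  have p_nth: "p ! i = \<bar>y i\<bar>" if "i < n" for i
    using that by (simp add: p_def)
  have "P (\<lambda>i. p ! i)"
    using P_mod_2[of "\<lambda>i. p ! i" y] \<open>P y\<close> by (simp add: p_nth)
  then obtain m T where "(m, T) \<in> set opts" and mT: "2 * m * (\<Sum>i\<leftarrow>T. p ! i) = S"
    using certificate abs_in_sum_sq_lists[OF y(1)] by (fastforce simp: split_certificate_def p_def)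
  then have T: "distinct T" "set T \<subseteq> {..<n}" "m^2 * int (length T) = R"
    and P_T: "P (\<lambda>i. if i \<in> set T then m else 0)"
    using certificate by (auto simp: split_certificate_def)
  \<comment> \<open>Signs do not change parities, so \<open>r\<close> still satisfies \<open>P\<close>, and \<open>2 * (y \<bullet> r) = S\<close>.\<close>
  define r where "r i = (if i \<in> set T then (if y i < 0 then - m else m) else 0)" for i
  have "P r"
    using P_mod_2[of r "\<lambda>i. if i \<in> set T then m else 0"] P_T by (simp add: r_def)
  moreover have "(\<Sum>i<n. (r i)^2) = R"
  proof -
    have "(\<Sum>i<n. (r i)^2) = (\<Sum>i\<in>set T. m^2)"
      using T by (intro sum.mono_neutral_cong_right) (auto simp: r_def)
    then show ?thesis
      using T by (simp add: distinct_card mult.commute)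
  qed
  moreover have "2 * (\<Sum>i<n. y i * r i) = S"
  proof -
    have "(\<Sum>i<n. y i * r i) = (\<Sum>i\<in>set T. m * \<bar>y i\<bar>)"
      using T by (intro sum.mono_neutral_cong_right) (auto simp: r_def)
    also have "\<dots> = m * (\<Sum>i\<leftarrow>T. p ! i)"
      using T by (auto simp: sum_distrib_left p_nth sum_list_distinct_conv_sum_set intro!: sum.cong)
    finally show ?thesis
      using mT by simp
  qed
  ultimately show ?thesis
    using y(1) by (auto simp: sum_power2_diff)
qed

lemma vector_4 [simp]:
  "(vector [x1, x2, x3, x4] :: 'a::zero^4) $ 1 = x1"
  "(vector [x1, x2, x3, x4] :: 'a::zero^4) $ 2 = x2"
  "(vector [x1, x2, x3, x4] :: 'a::zero^4) $ 3 = x3"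
  "(vector [x1, x2, x3, x4] :: 'a::zero^4) $ 4 = x4"
  unfolding vector_def by simp_all

lemma vector_8 [simp]:
  "(vector [x1, x2, x3, x4, x5, x6, x7, x8] :: 'a::zero^8) $ 1 = x1"
  "(vector [x1, x2, x3, x4, x5, x6, x7, x8] :: 'a::zero^8) $ 2 = x2"
  "(vector [x1, x2, x3, x4, x5, x6, x7, x8] :: 'a::zero^8) $ 3 = x3"
  "(vector [x1, x2, x3, x4, x5, x6, x7, x8] :: 'a::zero^8) $ 4 = x4"
  "(vector [x1, x2, x3, x4, x5, x6, x7, x8] :: 'a::zero^8) $ 5 = x5"
  "(vector [x1, x2, x3, x4, x5, x6, x7, x8] :: 'a::zero^8) $ 6 = x6"
  "(vector [x1, x2, x3, x4, x5, x6, x7, x8] :: 'a::zero^8) $ 7 = x7"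
  "(vector [x1, x2, x3, x4, x5, x6, x7, x8] :: 'a::zero^8) $ 8 = x8"
  unfolding vector_def by simp_all

lemma exhaust_8:
  fixes x :: 8
  shows "x = 1 \<or> x = 2 \<or> x = 3 \<or> x = 4 \<or> x = 5 \<or> x = 6 \<or> x = 7 \<or> x = 8"
proof (induct x)
  case (of_int z)
  then have "z = 0 \<or> z = 1 \<or> z = 2 \<or> z = 3 \<or> z = 4 \<or> z = 5 \<or> z = 6 \<or> z = 7"
    by fastforce
  then show ?case
    by auto
qed

lemma forall_8: "(\<forall>i::8. P i) \<longleftrightarrow> P 1 \<and> P 2 \<and> P 3 \<and> P 4 \<and> P 5 \<and> P 6 \<and> P 7 \<and> P 8"
  by (metis exhaust_8)

lemma UNIV_8: "UNIV = {1, 2, 3, 4, 5, 6, 7, 8::8}"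
  using exhaust_8 by auto

lemma sum_8: "sum f (UNIV::8 set) = f 1 + f 2 + f 3 + f 4 + f 5 + f 6 + f 7 + f 8"
  unfolding UNIV_8 by (simp add: ac_simps)

lemma norm_vec_power2: "norm (x::real^'n) ^ 2 = (\<Sum>i\<in>UNIV. (x $ i)^2)"
  unfolding norm_vec_def L2_set_def by (simp add: sum_nonneg)

definition eisenstein_norm :: "int \<Rightarrow> int \<Rightarrow> int" where
  "eisenstein_norm a b = a^2 + a * b + b^2"

lemma four_eisenstein_norm: "4 * eisenstein_norm a b = (2 * a + b)^2 + 3 * b^2"
  by (simp add: eisenstein_norm_def power2_eq_square algebra_simps)

lemma eisenstein_norm_commute: "eisenstein_norm a b = eisenstein_norm b a"
  by (simp add: eisenstein_norm_def algebra_simps)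

lemma eisenstein_norm_nonneg: "0 \<le> eisenstein_norm a b"
  using four_eisenstein_norm[of a b] zero_le_power2[of "2 * a + b"] zero_le_power2[of b]
  by linarith

lemma eisenstein_norm_le_3_bounds:
  assumes "eisenstein_norm a b \<le> 3"
  shows "a \<in> {-2, -1, 0, 1, 2} \<and> b \<in> {-2, -1, 0, 1, 2}"
proof -
  have "\<bar>b\<bar> \<le> 2" if "eisenstein_norm a b \<le> 3" for a b
  proof -
    have "b^2 \<le> 4"
      using four_eisenstein_norm[of a b] zero_le_power2[of "2 * a + b"] that by linarith
    then show ?thesis
      using abs_le_square_iff[of b 2] by simp
  qed
  then have "\<bar>a\<bar> \<le> 2" "\<bar>b\<bar> \<le> 2"
    using assms eisenstein_norm_commute[of a b] by metis+
  then show ?thesis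
    by auto
qed

lemma eisenstein_norm_neq_2: "eisenstein_norm a b \<noteq> 2"
proof
  assume "eisenstein_norm a b = 2"
  moreover have "a \<in> {-2, -1, 0, 1, 2}" "b \<in> {-2, -1, 0, 1, 2}"
    using eisenstein_norm_le_3_bounds[of a b] calculation by simp_all
  ultimately show False
    by (auto simp: eisenstein_norm_def)
qed

lemma eisenstein_norm_eq_0_iff: "eisenstein_norm a b = 0 \<longleftrightarrow> a = 0 \<and> b = 0"
proof
  assume "eisenstein_norm a b = 0"
  moreover have "a \<in> {-2, -1, 0, 1, 2}" "b \<in> {-2, -1, 0, 1, 2}"
    using eisenstein_norm_le_3_bounds[of a b] calculation by simp_all
  ultimately show "a = 0 \<and> b = 0"
    by (auto simp: eisenstein_norm_def)
qed (simp add: eisenstein_norm_def)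

lemma eisenstein_norm_eq_3_split:
  assumes "eisenstein_norm a b = 3"
  shows "\<exists>a' b'. eisenstein_norm a' b' = 1 \<and> eisenstein_norm (a - a') (b - b') = 1"
proof -
  have "a \<in> {-2, -1, 0, 1, 2}" "b \<in> {-2, -1, 0, 1, 2}"
    using eisenstein_norm_le_3_bounds[of a b] assms by simp_all
  then have "\<exists>(a', b')\<in>{(1, 0), (0, 1), (-1, 0), (0, -1), (1, -1), (-1, 1)}.
               eisenstein_norm a' b' = 1 \<and> eisenstein_norm (a - a') (b - b') = 1"
    using assms by (auto simp: eisenstein_norm_def)
  then show ?thesis
    by blast
qed

lemma sum_two_squares_neq_3: "(a::int)^2 + b^2 \<noteq> 3"
proof
  assume sum: "a^2 + b^2 = 3"
  have small: "x \<in> {-1, 0, 1}" if "x^2 < 4" for x :: int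
  proof -
    have "\<bar>x\<bar> < 2"
      using that abs_le_square_iff[of 2 x] by auto
    then show ?thesis
      by auto
  qed
  have "a^2 < 4" "b^2 < 4"
    using sum zero_le_power2[of a] zero_le_power2[of b] by linarith+
  then have "a \<in> {-1, 0, 1}" "b \<in> {-1, 0, 1}"
    using small by blast+
  then show False
    using sum by auto
qed

lemma three_remote_Ints: "three_remote (\<int> :: real set)"
proof (rule three_remoteI)
  fix z :: real assume "z \<in> \<int>" "norm z = sqrt 3"
  then obtain n where "z = of_int n"
    by (auto elim: Ints_cases)
  moreover have "norm z ^ 2 = 3"
    using \<open>norm z = sqrt 3\<close> by simp
  ultimately have "n^2 + 0^2 = 3"
    by (simp flip: of_int_power)
  then show "\<exists>u\<in>\<int>. z - u \<in> \<int> \<and> norm u \<le> 1 \<and> norm (z - u) \<le> 1"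
    using sum_two_squares_neq_3 by blast
qed

lemma three_remote_gaussian_integers: "three_remote (int_span [1, \<i>])"
  by (rule three_remote_int_span_quadratic_form[where s = 1 and F = "\<lambda>c. (c 0)^2 + (c 1)^2"])
     (auto simp: cmod_power2 sum_two_squares_neq_3)

lemma three_remote_eisenstein_integers: "three_remote (int_span [1, Complex (1/2) (sqrt 3 / 2)])"
proof (rule three_remote_int_span_quadratic_form
    [where s = 1 and F = "\<lambda>c. eisenstein_norm (c 0) (c 1)"])
  fix c :: "nat \<Rightarrow> int"
  assume "eisenstein_norm (c 0) (c 1) = 3 * 1"
  then obtain a b where "eisenstein_norm a b = 1" "eisenstein_norm (c 0 - a) (c 1 - b) = 1"
    using eisenstein_norm_eq_3_split[of "c 0" "c 1"] by (metis mult.right_neutral)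
  then show "\<exists>d::nat \<Rightarrow> int.
      eisenstein_norm (d 0) (d 1) = 1 \<and> eisenstein_norm (c 0 - d 0) (c 1 - d 1) = 1"
    by (intro exI[of _ "\<lambda>i. if i = 0 then a else b"]) simp
qed (simp_all add: cmod_power2 eisenstein_norm_def power2_sum power_mult_distrib power_divide
      field_simps)

lemma three_remote_eisenstein_squared:
  "three_remote (int_span [vector [1,0,0,0], vector [0,1,0,0],
                           vector [1/2,0,sqrt 3 / 2,0], vector [0,1/2,0,sqrt 3 / 2] :: real^4])"
proof (rule three_remote_int_span_quadratic_form
    [where s = 1 and F = "\<lambda>c. eisenstein_norm (c 0) (c 2) + eisenstein_norm (c 1) (c 3)"])
  fix c :: "nat \<Rightarrow> int"
  show "of_int 1 * norm (int_comb [vector [1,0,0,0], vector [0,1,0,0],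
          vector [1/2,0,sqrt 3 / 2,0], vector [0,1/2,0,sqrt 3 / 2] :: real^4] c) ^ 2 =
        of_int (eisenstein_norm (c 0) (c 2) + eisenstein_norm (c 1) (c 3))"
    unfolding norm_vec_power2 sum_4
    by (simp add: power_mult_distrib power_divide)
       (simp add: eval_nat_numeral eisenstein_norm_def algebra_simps)
next
  fix c :: "nat \<Rightarrow> int"
  assume "eisenstein_norm (c 0) (c 2) + eisenstein_norm (c 1) (c 3) = 3 * 1"
  then consider "eisenstein_norm (c 0) (c 2) = 3" "c 1 = 0" "c 3 = 0"
    | "eisenstein_norm (c 1) (c 3) = 3" "c 0 = 0" "c 2 = 0"
    using eisenstein_norm_nonneg[of "c 0" "c 2"] eisenstein_norm_nonneg[of "c 1" "c 3"]
      eisenstein_norm_neq_2[of "c 0" "c 2"] eisenstein_norm_neq_2[of "c 1" "c 3"]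
      eisenstein_norm_eq_0_iff[of "c 0" "c 2"] eisenstein_norm_eq_0_iff[of "c 1" "c 3"]
    by fastforce
  then show "\<exists>d::nat \<Rightarrow> int. eisenstein_norm (d 0) (d 2) + eisenstein_norm (d 1) (d 3) = 1 \<and>
      eisenstein_norm (c 0 - d 0) (c 2 - d 2) + eisenstein_norm (c 1 - d 1) (c 3 - d 3) = 1"
  proof cases
    case 1
    then obtain a b where "eisenstein_norm a b = 1" "eisenstein_norm (c 0 - a) (c 2 - b) = 1"
      using eisenstein_norm_eq_3_split by blast
    with 1 show ?thesis
      by (intro exI[of _ "\<lambda>i. if i = 0 then a else if i = 2 then b else 0"])
         (simp add: eisenstein_norm_def)
  next
    case 2
    then obtain a b where "eisenstein_norm a b = 1" "eisenstein_norm (c 1 - a) (c 3 - b) = 1"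
      using eisenstein_norm_eq_3_split by blast
    with 2 show ?thesis
      by (intro exI[of _ "\<lambda>i. if i = 1 then a else if i = 3 then b else 0"])
         (simp add: eisenstein_norm_def)
  qed
qed simp

lemma three_remote_eisenstein_times_integers:
  "three_remote (int_span [vector [1, 0, 0], vector [1/2, sqrt 3 / 2, 0], vector [0, 0, 1] :: real^3])"
proof (rule three_remote_int_span_quadratic_form
    [where s = 1 and F = "\<lambda>c. eisenstein_norm (c 0) (c 1) + (c 2)^2"])
  fix c :: "nat \<Rightarrow> int"
  show "of_int 1 * norm (int_comb [vector [1, 0, 0], vector [1/2, sqrt 3 / 2, 0],
          vector [0, 0, 1] :: real^3] c) ^ 2 = of_int (eisenstein_norm (c 0) (c 1) + (c 2)^2)"
    unfolding norm_vec_power2 sum_3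
    by (simp add: power_mult_distrib power_divide)
       (simp add: eval_nat_numeral eisenstein_norm_def algebra_simps)
next
  fix c :: "nat \<Rightarrow> int"
  assume sum: "eisenstein_norm (c 0) (c 1) + (c 2)^2 = 3 * 1"
  have "(c 2)^2 \<noteq> 1" "(c 2)^2 \<noteq> 3"
    using sum eisenstein_norm_neq_2[of "c 0" "c 1"] sum_two_squares_neq_3[of "c 2" 0] by auto
  moreover have "(c 2)^2 \<le> 3"
    using sum eisenstein_norm_nonneg[of "c 0" "c 1"] by linarith
  ultimately have "c 2 = 0"
    using abs_le_square_iff[of 2 "c 2"] by (auto simp: abs_le_iff power2_eq_1_iff)
  moreover obtain a b where "eisenstein_norm a b = 1" "eisenstein_norm (c 0 - a) (c 1 - b) = 1"
    using eisenstein_norm_eq_3_split[of "c 0" "c 1"] sum calculation by auto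
  ultimately show "\<exists>d::nat \<Rightarrow> int. eisenstein_norm (d 0) (d 1) + (d 2)^2 = 1 \<and>
      eisenstein_norm (c 0 - d 0) (c 1 - d 1) + (c 2 - d 2)^2 = 1"
    by (intro exI[of _ "\<lambda>i. if i = 0 then a else if i = 1 then b else 0"]) simp
qed simp

lemma three_remote_hurwitz_integers:
  "three_remote (int_span [vector [1,0,0,0], vector [0,1,0,0], vector [0,0,1,0],
                           vector [1/2,1/2,1/2,1/2] :: real^4])"
proof -
  let ?gs = "[vector [1,0,0,0], vector [0,1,0,0], vector [0,0,1,0], vector [1/2,1/2,1/2,1/2]]
              :: (real^4) list"
  let ?Y = "\<lambda>(c::nat \<Rightarrow> int) k. [2 * c 0 + c 3, 2 * c 1 + c 3, 2 * c 2 + c 3, c 3] ! k"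
  let ?P = "\<lambda>y::nat \<Rightarrow> int. even (y 0 + y 3) \<and> even (y 1 + y 3) \<and> even (y 2 + y 3)"
  let ?opts = "[(2, [0]), (2, [1]), (2, [2]), (2, [3]), (1, [0, 1, 2, 3])]"
  have norm: "of_int 4 * norm (int_comb ?gs c) ^ 2 = of_int (\<Sum>k<4. (?Y c k)^2)" for c
    unfolding norm_vec_power2 sum_4 by (simp add: eval_nat_numeral algebra_simps)
  have onto: "\<exists>c. \<forall>k<4. ?Y c k = y k" if "?P y" for y
  proof -
    obtain a0 a1 a2 where "y 0 - y 3 = 2 * a0" "y 1 - y 3 = 2 * a1" "y 2 - y 3 = 2 * a2"
      using \<open>?P y\<close> by (metis evenE even_diff)
    then show ?thesis
      by (intro exI[of _ "\<lambda>i. [a0, a1, a2, y 3] ! i"]) (auto simp: less_Suc_eq numeral_eq_Suc)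
  qed
  have certificate: "split_certificate 4 ?P ?opts 4 12"
    by code_simp
  have split: "\<exists>r. ?P r \<and> (\<Sum>k<4. (r k)^2) = 4 \<and> (\<Sum>k<4. (y k - r k)^2) = 4"
    if "(\<Sum>k<4. (y k)^2) = 3 * 4" "?P y" for y
    by (rule split_by_sign_pattern[where y = y, OF _ certificate _ that(2)])
       (simp add: less_Suc_eq numeral_eq_Suc even_add even_diff, simp add: that(1))
  show ?thesis
    by (rule three_remote_int_span_coordinates[where Y = ?Y and P = ?P, OF _ norm _ onto _ split])
       (auto simp: less_Suc_eq numeral_eq_Suc)
qed

lemma three_remote_fcc:
  "three_remote (int_span [vector [1 / sqrt 2, 1 / sqrt 2, 0], vector [1 / sqrt 2, - 1 / sqrt 2, 0],
                           vector [1 / sqrt 2, 0, 1 / sqrt 2] :: real^3])"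
proof -
  let ?gs = "[vector [1 / sqrt 2, 1 / sqrt 2, 0], vector [1 / sqrt 2, - 1 / sqrt 2, 0],
              vector [1 / sqrt 2, 0, 1 / sqrt 2]] :: (real^3) list"
  let ?Y = "\<lambda>(c::nat \<Rightarrow> int) k. [c 0 + c 1 + c 2, c 0 - c 1, c 2] ! k"
  let ?P = "\<lambda>y::nat \<Rightarrow> int. even (y 0 + y 1 + y 2)"
  let ?opts = "[(1, [0, 1]), (1, [0, 2]), (1, [1, 2])]"
  have norm: "of_int 2 * norm (int_comb ?gs c) ^ 2 = of_int (\<Sum>k<3. (?Y c k)^2)" for c
    unfolding norm_vec_power2 sum_3
    by (simp add: power_mult_distrib power_divide)
       (simp add: eval_nat_numeral algebra_simps add_divide_distrib)
  have onto: "\<exists>c. \<forall>k<3. ?Y c k = y k" if "?P y" for y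
  proof -
    obtain a b where "y 0 + y 1 - y 2 = 2 * a" "y 0 - y 1 - y 2 = 2 * b"
      using \<open>?P y\<close> by (metis evenE even_add even_diff)
    then show ?thesis
      by (intro exI[of _ "\<lambda>i. [a, b, y 2] ! i"]) (auto simp: less_Suc_eq numeral_eq_Suc)
  qed
  have certificate: "split_certificate 3 ?P ?opts 2 6"
    by code_simp
  have split: "\<exists>r. ?P r \<and> (\<Sum>k<3. (r k)^2) = 2 \<and> (\<Sum>k<3. (y k - r k)^2) = 2"
    if "(\<Sum>k<3. (y k)^2) = 3 * 2" "?P y" for y
    by (rule split_by_sign_pattern[where y = y, OF _ certificate _ that(2)])
       (simp add: less_Suc_eq numeral_eq_Suc even_add even_diff, simp add: that(1))
  show ?thesis
    by (rule three_remote_int_span_coordinates[where Y = ?Y and P = ?P, OF _ norm _ onto _ split])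
       (auto simp: less_Suc_eq numeral_eq_Suc)
qed

lemma cayley_integers_basis:
  "[oct_unit 0, oct_unit 1, oct_unit 2, oct_unit 3, oct_h,
    omul (oct_unit 1) oct_h, omul (oct_unit 2) oct_h, omul (oct_unit 3) oct_h] =
   [vector [1, 0, 0, 0, 0, 0, 0, 0],
    vector [0, 1, 0, 0, 0, 0, 0, 0],
    vector [0, 0, 1, 0, 0, 0, 0, 0],
    vector [0, 0, 0, 1, 0, 0, 0, 0],
    vector [0, 1/2, 1/2, 1/2, - 1/2, 0, 0, 0],
    vector [- 1/2, 0, - 1/2, 1/2, 0, - 1/2, 0, 0],
    vector [- 1/2, 1/2, 0, - 1/2, 0, 0, - 1/2, 0],
    vector [- 1/2, - 1/2, 1/2, 0, 0, 0, 0, - 1/2]]"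
proof -
  have "oct_unit k = vector (map (\<lambda>n. if n = k then 1 else 0) [0, 1, 2, 3, 4, 5, 6, 7])" for k
    by (simp add: oct_unit_def upt_rec)
  then show ?thesis
    by (simp add: vec_eq_iff forall_8 omul_def oct_h_def oct_fst_def oct_snd_def oct_pair_def
        qmul_def qconj_def Let_def)
qed

lemma three_remote_cayley_integers:
  "three_remote (int_span [oct_unit 0, oct_unit 1, oct_unit 2, oct_unit 3, oct_h,
                           omul (oct_unit 1) oct_h, omul (oct_unit 2) oct_h, omul (oct_unit 3) oct_h])"
proof -
  let ?gs = "[vector [1, 0, 0, 0, 0, 0, 0, 0],
              vector [0, 1, 0, 0, 0, 0, 0, 0],
              vector [0, 0, 1, 0, 0, 0, 0, 0],
              vector [0, 0, 0, 1, 0, 0, 0, 0],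
              vector [0, 1/2, 1/2, 1/2, - 1/2, 0, 0, 0],
              vector [- 1/2, 0, - 1/2, 1/2, 0, - 1/2, 0, 0],
              vector [- 1/2, 1/2, 0, - 1/2, 0, 0, - 1/2, 0],
              vector [- 1/2, - 1/2, 1/2, 0, 0, 0, 0, - 1/2]] :: (real^8) list"
  let ?Y = "\<lambda>(c::nat \<Rightarrow> int) k.
     [2 * c 0 - c 5 - c 6 - c 7, 2 * c 1 + c 4 + c 6 - c 7, 2 * c 2 + c 4 - c 5 + c 7,
      2 * c 3 + c 4 + c 5 - c 6, - c 4, - c 5, - c 6, - c 7] ! k"
  let ?P = "\<lambda>y::nat \<Rightarrow> int. even (y 1 + y 2 + y 3 + y 4) \<and> even (y 0 + y 2 + y 3 + y 5) \<and>
                           even (y 0 + y 1 + y 3 + y 6) \<and> even (y 0 + y 1 + y 2 + y 7)"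
  let ?opts = "[(2, [0]), (2, [1]), (2, [2]), (2, [3]), (2, [4]), (2, [5]), (2, [6]), (2, [7]),
    (1, [1, 2, 3, 4]), (1, [0, 2, 3, 5]), (1, [0, 1, 3, 6]), (1, [0, 1, 2, 7]),
    (1, [0, 1, 4, 5]), (1, [0, 2, 4, 6]), (1, [0, 3, 4, 7]), (1, [1, 2, 5, 6]),
    (1, [1, 3, 5, 7]), (1, [2, 3, 6, 7]), (1, [0, 5, 6, 7]), (1, [1, 4, 6, 7]),
    (1, [2, 4, 5, 7]), (1, [3, 4, 5, 6])]"
  have norm: "of_int 4 * norm (int_comb ?gs c) ^ 2 = of_int (\<Sum>k<8. (?Y c k)^2)" for c
    unfolding norm_vec_power2 sum_8 by (simp add: eval_nat_numeral algebra_simps)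
  have onto: "\<exists>c. \<forall>k<8. ?Y c k = y k" if "?P y" for y
  proof -
    have "even (y 0 - y 5 - y 6 - y 7)" "even (y 1 + y 4 + y 6 - y 7)"
      "even (y 2 + y 4 - y 5 + y 7)" "even (y 3 + y 4 + y 5 - y 6)"
      using \<open>?P y\<close> by presburger+
    then obtain a0 a1 a2 a3 where
      "y 0 - y 5 - y 6 - y 7 = 2 * a0" "y 1 + y 4 + y 6 - y 7 = 2 * a1"
      "y 2 + y 4 - y 5 + y 7 = 2 * a2" "y 3 + y 4 + y 5 - y 6 = 2 * a3"
      by (metis evenE)
    then show ?thesis
      by (intro exI[of _ "\<lambda>i. [a0, a1, a2, a3, - y 4, - y 5, - y 6, - y 7] ! i"])
         (auto simp: less_Suc_eq numeral_eq_Suc)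
  qed
  have certificate: "split_certificate 8 ?P ?opts 4 12"
    by code_simp
  have split: "\<exists>r. ?P r \<and> (\<Sum>k<8. (r k)^2) = 4 \<and> (\<Sum>k<8. (y k - r k)^2) = 4"
    if "(\<Sum>k<8. (y k)^2) = 3 * 4" "?P y" for y
    by (rule split_by_sign_pattern[where y = y, OF _ certificate _ that(2)])
       (simp add: less_Suc_eq numeral_eq_Suc even_add even_diff, simp add: that(1))
  show ?thesis
    unfolding cayley_integers_basis
    by (rule three_remote_int_span_coordinates[where Y = ?Y and P = ?P, OF _ norm _ onto _ split])
       (auto simp: less_Suc_eq numeral_eq_Suc)
qed

theorem proposition2p6:
  shows
   "three_remote (\<int> :: real set)
    \<and> three_remote (int_span [1, \<i>])
    \<and> three_remote (int_span [1, Complex (1/2) (sqrt 3 / 2)])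
    \<and> three_remote (int_span [vector [1,0,0,0], vector [0,1,0,0], vector [0,0,1,0],
                              vector [1/2,1/2,1/2,1/2] :: real^4])
    \<and> three_remote (int_span [vector [1,0,0,0], vector [0,1,0,0],
                              vector [1/2,0,sqrt 3 / 2,0], vector [0,1/2,0,sqrt 3 / 2] :: real^4])
    \<and> three_remote (int_span [oct_unit 0, oct_unit 1, oct_unit 2, oct_unit 3, oct_h,
                              omul (oct_unit 1) oct_h, omul (oct_unit 2) oct_h,
                              omul (oct_unit 3) oct_h])
    \<and> three_remote (int_span [vector [1 / sqrt 2, 1 / sqrt 2, 0],
                              vector [1 / sqrt 2, - 1 / sqrt 2, 0],
                              vector [1 / sqrt 2, 0, 1 / sqrt 2] :: real^3])
    \<and> three_remote (int_span [vector [1, 0, 0], vector [1/2, sqrt 3 / 2, 0],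
                              vector [0, 0, 1] :: real^3])"
  using three_remote_Ints three_remote_gaussian_integers three_remote_eisenstein_integers
    three_remote_hurwitz_integers three_remote_eisenstein_squared three_remote_cayley_integers
    three_remote_fcc three_remote_eisenstein_times_integers
  by blast

end
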